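(* Let $\mathcal{U}\subset\Delta(\mathcal{X}\times\mathcal{Y})$ be a convex and compact uncertainty set and let $\mathrm{h}^{\mathcal{U}}$ be an $\ell$-MRC for $\mathcal{U}$. If $\mathcal{U}$ contains the true underlying distribution $\mathrm{p}^*$, then $$\min_{\mathrm{h}\in \mathrm{T}(\mathcal{X},\mathcal{Y})}R_\ell(\mathrm{h})\leq H_\ell(\mathcal{U}),\qquad R_\ell(\mathrm{h}^{\mathcal{U}})\leq H_\ell(\mathcal{U}).$$ In addition, if $\mathrm{p}^*$ maximizes the $\ell$-entropy over $\mathcal{U}$, then $\ell$-MRCs for $\mathcal{U}$ are Bayes classifiers and $$\min_{\mathrm{h}\in \mathrm{T}(\mathcal{X},\mathcal{Y})}R_\ell(\mathrm{h})= R_\ell(\mathrm{h}^{\mathcal{U}})=H_\ell(\mathcal{U}).$$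
   Context: Let $\mathcal{X}$ and $\mathcal{Y}$ be finite nonempty sets, with $\mathcal{Y}=\{1,\dots,|\mathcal{Y}|\}$. For a finite set $\mathcal{Z}$, $\Delta(\mathcal{Z})$ denotes the set of probability distributions on $\mathcal{Z}$. A classification rule is a map $\mathrm{h}$ assigning to each $x\in\mathcal{X}$ a distribution $\mathrm{h}(\cdot|x)\in\Delta(\mathcal{Y})$; $\mathrm{T}(\mathcal{X},\mathcal{Y})$ is the set of all classification rules. A score function $L:\Delta(\mathcal{Y})\times\mathcal{Y}\to(-\infty,\infty]$ is lower semi-continuous and convex in its first argument; the associated classification loss is $\ell(\mathrm{h},(x,y))=L(\mathrm{h}(\cdot|x),y)$, and for $\mathrm{p}\in\Delta(\mathcal{X}\times\mathcal{Y})$, $\ell(\mathrm{h},\mathrm{p})=\sum_{x,y}\mathrm{p}(x,y)\ell(\mathrm{h},(x,y))$. $H_\ell(\mathrm{p})=\min_{\mathrm{h}\in\mathrm{T}(\mathcal{X},\mathcal{Y})}\ell(\mathrm{h},\mathrm{p})$ and $H_\ell(\mathcal{U})=\max_{\mathrm{p}\in\mathcal{U}}H_\ell(\mathrm{p})$. A rule $\mathrm{h}^{\mathcal{U}}$ is an $\ell$-MRC for $\mathcal{U}$ if $\mathrm{h}^{\mathcal{U}}\in\arg\min_{\mathrm{h}}\max_{\mathrm{p}\in\mathcal{U}}\ell(\mathrm{h},\mathrm{p})$. $\mathrm{p}^*\in\Delta(\mathcal{X}\times\mathcal{Y})$ is the true underlying distribution of instance-label pairs, $R_\ell(\mathrm{h})=\ell(\mathrm{h},\mathrm{p}^*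 )$ is the $\ell$-risk, and a Bayes classifier is a rule minimizing $R_\ell$ over $\mathrm{T}(\mathcal{X},\mathcal{Y})$. *)

theory Defs
  imports "HOL-Analysis.Analysis"
begin

definition prob_simplex :: "(real^'n::finite) set" where
  "prob_simplex = {q. (\<forall>i. 0 \<le> q $ i) \<and> (\<Sum>i\<in>UNIV. q $ i) = 1}"

definition rules :: "('x::finite \<Rightarrow> real^'y::finite) set" where
  "rules = {h. \<forall>x. h x \<in> prob_simplex}"

definition lsc_rel :: "'a::topological_space set \<Rightarrow> ('a \<Rightarrow> ereal) \<Rightarrow> bool" where
  "lsc_rel S f = (\<forall>q\<in>S. f q \<le> Liminf (at q within S) f)"

definition convex_ereal_on :: "'a::real_vector set \<Rightarrow> ('a \<Rightarrow> ereal) \<Rightarrow> bool" where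
  "convex_ereal_on S f = (\<forall>a\<in>S. \<forall>b\<in>S. \<forall>t::real. 0 \<le> t \<and> t \<le> 1 \<longrightarrow>
      f (t *\<^sub>R a + (1 - t) *\<^sub>R b) \<le> ereal t * f a + ereal (1 - t) * f b)"

definition score_function :: "(real^'y::finite \<Rightarrow> 'y \<Rightarrow> ereal) \<Rightarrow> bool" where
  "score_function L = (\<forall>y. (\<forall>q\<in>prob_simplex. L q y \<noteq> -\<infinity>)
      \<and> lsc_rel prob_simplex (\<lambda>q. L q y) \<and> convex_ereal_on prob_simplex (\<lambda>q. L q y))"

text \<open>Expected loss l(h,p) (convention 0 * infinity = 0).\<close>
definition loss :: "(real^'y \<Rightarrow> 'y \<Rightarrow> ereal) \<Rightarrow> ('x::finite \<Rightarrow> real^'y::finite)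
     \<Rightarrow> real^('x \<times> 'y) \<Rightarrow> ereal" where
  "loss L h p = (\<Sum>(x,y)\<in>UNIV. ereal (p $ (x,y)) * L (h x) y)"

definition entropy :: "(real^'y \<Rightarrow> 'y \<Rightarrow> ereal) \<Rightarrow> real^('x::finite \<times> 'y::finite) \<Rightarrow> ereal" where
  "entropy L p = (INF h\<in>(rules :: ('x \<Rightarrow> real^'y) set). loss L h p)"

definition entropy_set :: "(real^'y \<Rightarrow> 'y \<Rightarrow> ereal) \<Rightarrow> (real^('x::finite \<times> 'y::finite)) set \<Rightarrow> ereal" where
  "entropy_set L U = (SUP p\<in>U. entropy L p)"

definition worst_loss :: "(real^'y \<Rightarrow> 'y \<Rightarrow> ereal) \<Rightarrow> (real^('x::finite \<times> 'y::finite)) set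
     \<Rightarrow> ('x \<Rightarrow> real^'y) \<Rightarrow> ereal" where
  "worst_loss L U h = (SUP p\<in>U. loss L h p)"

definition is_MRC :: "(real^'y \<Rightarrow> 'y \<Rightarrow> ereal) \<Rightarrow> (real^('x::finite \<times> 'y::finite)) set
     \<Rightarrow> ('x \<Rightarrow> real^'y) \<Rightarrow> bool" where
  "is_MRC L U h = (h \<in> rules \<and> (\<forall>g\<in>rules. worst_loss L U h \<le> worst_loss L U g))"

definition risk :: "(real^'y \<Rightarrow> 'y \<Rightarrow> ereal) \<Rightarrow> real^('x::finite \<times> 'y::finite)
     \<Rightarrow> ('x \<Rightarrow> real^'y) \<Rightarrow> ereal" where
  "risk L pstar h = loss L h pstar"

definition is_Bayes :: "(real^'y \<Rightarrow> 'y \<Rightarrow> ereal) \<Rightarrow> real^('x::finite \<times> 'y::finite)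
     \<Rightarrow> ('x \<Rightarrow> real^'y) \<Rightarrow> bool" where
  "is_Bayes L pstar h = (h \<in> rules \<and> (\<forall>g\<in>rules. risk L pstar h \<le> risk L pstar g))"

end

theory Submission
  imports Defs
begin

text \<open>Since the risk of a rule is at most its worst-case loss over \<open>U \<ni> p*\<close>, and the Bayes risk
  is \<open>H(p*) \<le> H(U)\<close>, everything reduces to the minimax inequality
  \<open>inf\<^sub>h sup\<^sub>p l(h,p) \<le> sup\<^sub>p inf\<^sub>h l(h,p) = H(U)\<close>, whose left side is the worst-case loss of any MRC.
  It holds because \<open>l(h,p)\<close> is bounded below, convex and lower semicontinuous in the rule \<open>h\<close>,
  affine in \<open>p\<close>, and the rules form a compact convex set. The argument is Kneser's and Fan's: for
  two distributions, a line in the plane separating the attainable pairs of losses from an open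
  quadrant yields a mixture of the two at which every rule loses too much; induction extends this
  to finitely many distributions, and compactness of the set of rules to all of \<open>U\<close>.\<close>

lemma ereal_convex_comb_less:
  fixes a b :: ereal
  assumes "a < ereal c" "b < ereal c" "0 \<le> t" "t \<le> 1"
  shows "ereal t * a + ereal (1 - t) * b < ereal c"
proof (cases a; cases b)
  fix r s assume "a = ereal r" "b = ereal s"
  then show ?thesis using assms by (simp add: convex_bound_lt)
qed (use assms in auto)

lemma ereal_convex_comb_mult_left:
  fixes a b :: ereal
  assumes "0 \<le> p" "0 \<le> t" "t \<le> 1"
  shows "ereal p * (ereal t * a + ereal (1 - t) * b) = ereal t * (ereal p * a) + ereal (1 - t) * (ereal p * b)"
  using assms by (simp add: ereal_pos_distrib mult.left_commute)

lemma ereal_convex_comb_weights_mult: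
  fixes l :: ereal
  assumes "0 \<le> a" "0 \<le> b" "0 \<le> t" "t \<le> 1"
  shows "ereal (t * a + (1 - t) * b) * l = ereal t * (ereal a * l) + ereal (1 - t) * (ereal b * l)"
proof -
  have "ereal (t * a + (1 - t) * b) * l = ereal (t * a) * l + ereal ((1 - t) * b) * l"
    using assms by (simp add: ereal_left_distrib flip: plus_ereal.simps)
  then show ?thesis by (metis mult.assoc times_ereal.simps(1))
qed

lemma ereal_mult_sum_left: "0 \<le> c \<Longrightarrow> ereal c * sum f A = (\<Sum>x\<in>A. ereal c * f x)"
  by (simp only: mult.commute[of "ereal c"] sum_distrib_right_ereal)

lemma bounded_above_on_ray_imp_slope_nonpos:
  fixes \<alpha> \<beta> b :: real
  assumes "\<And>t. 0 \<le> t \<Longrightarrow> \<alpha> + \<beta> * t \<le> b"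
  shows "\<beta> \<le> 0"
proof (rule ccontr)
  assume "\<not> \<beta> \<le> 0"
  then have "\<beta> * ((\<bar>b\<bar> + \<bar>\<alpha>\<bar> + 1) / \<beta>) = \<bar>b\<bar> + \<bar>\<alpha>\<bar> + 1" "0 \<le> (\<bar>b\<bar> + \<bar>\<alpha>\<bar> + 1) / \<beta>"
    by auto
  with assms show False by fastforce
qed

lemma convex_disjoint_open_quadrant_weight:
  fixes S :: "(real \<times> real) set"
  assumes "convex S" "S \<noteq> {}" and disjoint: "\<And>z. z \<in> S \<Longrightarrow> \<not> (fst z < c \<and> snd z < c)"
  shows "\<exists>w. 0 \<le> w \<and> w \<le> 1 \<and> (\<forall>z\<in>S. c \<le> w * fst z + (1 - w) * snd z)"
proof -
  define T where "T = {z :: real \<times> real. fst z < c \<and> snd z < c}"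
  have "convex T"
    unfolding T_def by (rule convexI) (auto intro: convex_bound_lt)
  moreover have "(c - 1, c - 1) \<in> T" by (simp add: T_def)
  moreover have "T \<inter> S = {}" using disjoint by (auto simp: T_def)
  ultimately obtain a b where "a \<noteq> 0" and T_below: "\<forall>z\<in>T. inner a z \<le> b" and S_above: "\<forall>z\<in>S. b \<le> inner a z"
    using separating_hyperplane_sets[of T S] assms(1,2) by blast
  obtain a1 a2 where a: "a = (a1, a2)" by fastforce
  have below: "a1 * z1 + a2 * z2 \<le> b" if "z1 < c" "z2 < c" for z1 z2
    using T_below that by (auto simp: T_def a)
  have "(a1 * (c - 1) + a2 * (c - 1)) + (- a1) * t \<le> b" if "0 \<le> t" for t
    using below[of "c - 1 - t" "c - 1"] that by (simp add: algebra_simps)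
  then have "a1 \<ge> 0" using bounded_above_on_ray_imp_slope_nonpos by fastforce
  have "(a1 * (c - 1) + a2 * (c - 1)) + (- a2) * t \<le> b" if "0 \<le> t" for t
    using below[of "c - 1" "c - 1 - t"] that by (simp add: algebra_simps)
  then have "a2 \<ge> 0" using bounded_above_on_ray_imp_slope_nonpos by fastforce
  define s where "s = a1 + a2"
  have "a2 = s - a1" by (simp add: s_def)
  have "s > 0" using \<open>a \<noteq> 0\<close> \<open>a1 \<ge> 0\<close> \<open>a2 \<ge> 0\<close> by (auto simp: s_def a zero_prod_def)
  have "s * c \<le> b + e" if "e > 0" for e
  proof -
    have "a1 * (c - e / s) + a2 * (c - e / s) = s * (c - e / s)"
      by (simp only: s_def distrib_right)
    also have "\<dots> = s * c - e"
      using \<open>s > 0\<close> by (simp add: right_diff_distrib)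
    finally have "a1 * (c - e / s) + a2 * (c - e / s) = s * c - e" .
    then show ?thesis using below[of "c - e / s" "c - e / s"] that \<open>s > 0\<close> by simp
  qed
  then have "s * c \<le> b" by (rule field_le_epsilon)
  show ?thesis
  proof (intro exI conjI ballI)
    show "0 \<le> a1 / s" "a1 / s \<le> 1" using \<open>a1 \<ge> 0\<close> \<open>a2 \<ge> 0\<close> \<open>s > 0\<close> by (auto simp: s_def)
    fix z assume "z \<in> S"
    then have "s * c \<le> a1 * fst z + a2 * snd z"
      using S_above \<open>s * c \<le> b\<close> by (cases z) (auto simp: a)
    then show "c \<le> a1 / s * fst z + (1 - a1 / s) * snd z"
      using \<open>s > 0\<close> by (simp add: field_simps \<open>a2 = s - a1\<close>)
  qed
qed

locale convex_affine_payoff =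
  fixes X :: "'a::{real_vector, topological_space} set" and Y :: "'b::real_vector set"
    and f :: "'a \<Rightarrow> 'b \<Rightarrow> ereal" and m :: real
  assumes convex_Y: "convex Y"
    and bounded_below: "\<And>x y. x \<in> X \<Longrightarrow> y \<in> Y \<Longrightarrow> ereal m \<le> f x y"
    and convex_in_fst: "\<And>x1 x2 y t. x1 \<in> X \<Longrightarrow> x2 \<in> X \<Longrightarrow> y \<in> Y \<Longrightarrow> 0 \<le> t \<Longrightarrow> t \<le> 1 \<Longrightarrow>
      f (t *\<^sub>R x1 + (1 - t) *\<^sub>R x2) y \<le> ereal t * f x1 y + ereal (1 - t) * f x2 y"
    and affine_in_snd: "\<And>x y1 y2 t. x \<in> X \<Longrightarrow> y1 \<in> Y \<Longrightarrow> y2 \<in> Y \<Longrightarrow> 0 \<le> t \<Longrightarrow> t \<le> 1 \<Longrightarrow>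
      f x (t *\<^sub>R y1 + (1 - t) *\<^sub>R y2) = ereal t * f x y1 + ereal (1 - t) * f x y2"
begin

lemma finite_at_ends_if_finite_between:
  assumes "x \<in> X" "y1 \<in> Y" "y2 \<in> Y" "0 < t" "t < 1"
    and "f x (t *\<^sub>R y1 + (1 - t) *\<^sub>R y2) \<noteq> \<infinity>"
  shows "\<exists>r1 r2. f x y1 = ereal r1 \<and> f x y2 = ereal r2"
proof -
  have "ereal t * f x y1 + ereal (1 - t) * f x y2 \<noteq> \<infinity>"
    using assms affine_in_snd by simp
  moreover have "ereal m \<le> f x y1" "ereal m \<le> f x y2"
    using assms bounded_below by auto
  ultimately show ?thesis
    using assms(4,5) by (cases "f x y1"; cases "f x y2") auto
qed

definition upper_image :: "'a set \<Rightarrow> 'b \<Rightarrow> 'b \<Rightarrow> (real \<times> real) set" where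
  "upper_image X' y1 y2 = {z. \<exists>x\<in>X'. f x y1 \<le> ereal (fst z) \<and> f x y2 \<le> ereal (snd z)}"

lemma convex_upper_image:
  assumes "convex X'" "X' \<subseteq> X" "y1 \<in> Y" "y2 \<in> Y"
  shows "convex (upper_image X' y1 y2)"
proof (rule convexI)
  fix z w :: "real \<times> real" and u v :: real
  assume "z \<in> upper_image X' y1 y2" "w \<in> upper_image X' y1 y2" "0 \<le> u" "0 \<le> v" "u + v = 1"
  then obtain x1 x2 where x: "x1 \<in> X'" "x2 \<in> X'"
    and z: "f x1 y1 \<le> ereal (fst z)" "f x1 y2 \<le> ereal (snd z)"
    and w: "f x2 y1 \<le> ereal (fst w)" "f x2 y2 \<le> ereal (snd w)" and v: "v = 1 - u" "u \<le> 1"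
    by (auto simp: upper_image_def)
  have "f (u *\<^sub>R x1 + v *\<^sub>R x2) y \<le> ereal (u * a + v * b)"
    if "y \<in> Y" "f x1 y \<le> ereal a" "f x2 y \<le> ereal b" for y a b
  proof -
    have "f (u *\<^sub>R x1 + v *\<^sub>R x2) y \<le> ereal u * f x1 y + ereal v * f x2 y"
      using convex_in_fst[of x1 x2 y u] x \<open>X' \<subseteq> X\<close> that v \<open>0 \<le> u\<close> by auto
    also have "\<dots> \<le> ereal u * ereal a + ereal v * ereal b"
      using that \<open>0 \<le> u\<close> \<open>0 \<le> v\<close> by (intro add_mono ereal_mult_left_mono) auto
    finally show ?thesis by simp
  qed
  moreover have "u *\<^sub>R x1 + v *\<^sub>R x2 \<in> X'"
    using \<open>convex X'\<close> x \<open>0 \<le> u\<close> \<open>0 \<le> v\<close> \<open>u + v = 1\<close> by (rule convexD)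
  ultimately show "u *\<^sub>R z + v *\<^sub>R w \<in> upper_image X' y1 y2"
    using z w \<open>y1 \<in> Y\<close> \<open>y2 \<in> Y\<close> unfolding upper_image_def by fastforce
qed

text \<open>Tilting the weight \<open>w\<close> towards \<open>1/2\<close> keeps the point strictly inside the segment, so that a
  finite value there forces finite values at both ends; the price is lowering the level from
  \<open>c\<close> to \<open>c1\<close>.\<close>

lemma segment_point_above_level:
  assumes "X' \<subseteq> X" "y1 \<in> Y" "y2 \<in> Y" "0 \<le> w" "w \<le> 1" "c1 < c"
    and above: "\<And>z. z \<in> upper_image X' y1 y2 \<Longrightarrow> c \<le> w * fst z + (1 - w) * snd z"
  obtains t where "0 < t" "t < 1" "\<And>x. x \<in> X' \<Longrightarrow> ereal c1 \<le> f x (t *\<^sub>R y1 + (1 - t) *\<^sub>R y2)"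
proof -
  define m1 where "m1 = min m c1"
  define d where "d = (c - c1) / (c - m1)"
  define t where "t = (1 - d) * w + d / 2"
  have "m1 \<le> c1" by (simp add: m1_def)
  then have d: "0 < d" "d \<le> 1" using \<open>c1 < c\<close> by (auto simp: d_def)
  have "d * (c - m1) = c - c1" using \<open>c1 < c\<close> \<open>m1 \<le> c1\<close> by (simp add: d_def)
  then have level: "(1 - d) * c + d * m1 = c1" by (simp add: algebra_simps)
  have "0 \<le> (1 - d) * w" "(1 - d) * w \<le> 1 - d"
    using assms(4,5) d by (simp_all add: mult_left_le)
  then have "0 < t" "t < 1" using d by (auto simp: t_def)
  moreover have "ereal c1 \<le> f x (t *\<^sub>R y1 + (1 - t) *\<^sub>R y2)" if "x \<in> X'" for x
  proof (cases "f x (t *\<^sub>R y1 + (1 - t) *\<^sub>R y2) = \<infinity>")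
    case False
    have "x \<in> X" using that assms(1) by blast
    then obtain r1 r2 where r: "f x y1 = ereal r1" "f x y2 = ereal r2"
      using finite_at_ends_if_finite_between[of x y1 y2 t] \<open>0 < t\<close> \<open>t < 1\<close> False assms(2,3) by blast
    then have "(r1, r2) \<in> upper_image X' y1 y2"
      using that unfolding upper_image_def by (auto intro!: bexI[of _ x])
    then have "c \<le> w * r1 + (1 - w) * r2" using above by fastforce
    moreover have "m1 \<le> (r1 + r2) / 2"
      using bounded_below[OF \<open>x \<in> X\<close> \<open>y1 \<in> Y\<close>] bounded_below[OF \<open>x \<in> X\<close> \<open>y2 \<in> Y\<close>] r
      by (simp add: m1_def)
    ultimately have "c1 \<le> (1 - d) * (w * r1 + (1 - w) * r2) + d * ((r1 + r2) / 2)"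
      unfolding level[symmetric] using d by (intro add_mono mult_left_mono) auto
    also have "\<dots> = t * r1 + (1 - t) * r2" by (simp add: t_def algebra_simps)
    also have "ereal \<dots> = f x (t *\<^sub>R y1 + (1 - t) *\<^sub>R y2)"
      using affine_in_snd[OF \<open>x \<in> X\<close> \<open>y1 \<in> Y\<close> \<open>y2 \<in> Y\<close>, of t] \<open>0 < t\<close> \<open>t < 1\<close> r by simp
    finally show ?thesis by simp
  qed simp
  ultimately show ?thesis using that by blast
qed

lemma two_points_simultaneously_below:
  assumes "convex X'" "X' \<subseteq> X"
    and below: "\<And>y c. y \<in> Y \<Longrightarrow> v < c \<Longrightarrow> \<exists>x\<in>X'. f x y < ereal c"
    and "y1 \<in> Y" "y2 \<in> Y" "v < c"
  shows "\<exists>x\<in>X'. f x y1 < ereal c \<and> f x y2 < ereal c"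
proof (rule ccontr)
  assume none: "\<not> ?thesis"
  let ?S = "upper_image X' y1 y2"
  have between_in_Y: "t *\<^sub>R y1 + (1 - t) *\<^sub>R y2 \<in> Y" if "0 \<le> t" "t \<le> 1" for t
    using convexD[OF convex_Y \<open>y1 \<in> Y\<close> \<open>y2 \<in> Y\<close>] that by simp
  obtain x0 where x0: "x0 \<in> X'" "f x0 ((1/2) *\<^sub>R y1 + (1 - 1/2) *\<^sub>R y2) < ereal (v + 1)"
    using below[OF between_in_Y, of "1/2" "v + 1"] by auto
  moreover have "x0 \<in> X" using x0(1) assms(2) by blast
  ultimately obtain r1 r2 where "f x0 y1 = ereal r1" "f x0 y2 = ereal r2"
    using finite_at_ends_if_finite_between[of x0 y1 y2 "1/2"] assms(4,5) by force
  then have "(r1, r2) \<in> ?S" using x0(1) unfolding upper_image_def by (auto intro!: bexI[of _ x0])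
  then have "?S \<noteq> {}" by blast
  moreover have "\<not> (fst z < c \<and> snd z < c)" if "z \<in> ?S" for z
  proof
    assume "fst z < c \<and> snd z < c"
    moreover obtain x where "x \<in> X'" "f x y1 \<le> ereal (fst z)" "f x y2 \<le> ereal (snd z)"
      using \<open>z \<in> ?S\<close> unfolding upper_image_def by blast
    ultimately show False using none by (meson ereal_less_eq(3) le_less_trans less_ereal.simps(1))
  qed
  ultimately obtain w where w: "0 \<le> w" "w \<le> 1"
    and above: "\<And>z. z \<in> ?S \<Longrightarrow> c \<le> w * fst z + (1 - w) * snd z"
    using convex_disjoint_open_quadrant_weight[OF convex_upper_image[OF assms(1,2,4,5)], of c]
    by auto
  define c1 where "c1 = (v + c) / 2"
  have "v < c1" "c1 < c" using \<open>v < c\<close> by (simp_all add: c1_def)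
  then obtain t where t: "0 < t" "t < 1"
    and above_c1: "\<And>x. x \<in> X' \<Longrightarrow> ereal c1 \<le> f x (t *\<^sub>R y1 + (1 - t) *\<^sub>R y2)"
    using segment_point_above_level[OF assms(2,4,5) w _ above] by blast
  obtain x where "x \<in> X'" "f x (t *\<^sub>R y1 + (1 - t) *\<^sub>R y2) < ereal c1"
    using below[OF between_in_Y, of t c1] t \<open>v < c1\<close> by auto
  with above_c1 show False by (meson not_le)
qed

lemma finite_set_simultaneously_below:
  assumes "finite P" "P \<subseteq> Y" "Y \<noteq> {}" "convex X'" "X' \<subseteq> X"
    and "\<And>y c. y \<in> Y \<Longrightarrow> v < c \<Longrightarrow> \<exists>x\<in>X'. f x y < ereal c" and "v < c"
  shows "\<exists>x\<in>X'. \<forall>y\<in>P. f x y < ereal c"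
  using assms(1,2,4-6)
proof (induction P arbitrary: X' rule: finite_induct)
  case empty
  then show ?case using \<open>Y \<noteq> {}\<close> \<open>v < c\<close> by fastforce
next
  case (insert y0 P)
  define X'' where "X'' = {x \<in> X'. f x y0 < ereal c}"
  have "y0 \<in> Y" using insert.prems(1) by simp
  have convex: "convex X''"
  proof (rule convexI)
    fix x1 x2 and u v :: real
    assume x: "x1 \<in> X''" "x2 \<in> X''" and u: "0 \<le> u" "0 \<le> v" "u + v = 1"
    then have "x1 \<in> X" "x2 \<in> X" using insert.prems(3) by (auto simp: X''_def)
    have "v = 1 - u" using u(3) by simp
    have "f (u *\<^sub>R x1 + (1 - u) *\<^sub>R x2) y0 \<le> ereal u * f x1 y0 + ereal (1 - u) * f x2 y0"
      using convex_in_fst \<open>x1 \<in> X\<close> \<open>x2 \<in> X\<close> \<open>y0 \<in> Y\<close> u by auto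
    also have "\<dots> < ereal c"
      using x u by (intro ereal_convex_comb_less) (auto simp: X''_def)
    finally show "u *\<^sub>R x1 + v *\<^sub>R x2 \<in> X''"
      using convexD[OF insert.prems(2)] x u \<open>v = 1 - u\<close> by (auto simp: X''_def)
  qed
  have below: "\<exists>x\<in>X''. f x y < ereal c'" if "y \<in> Y" "v < c'" for y c'
  proof -
    obtain x where x: "x \<in> X'" "f x y < ereal (min c c')" "f x y0 < ereal (min c c')"
      using two_points_simultaneously_below[OF insert.prems(2-4) \<open>y \<in> Y\<close> \<open>y0 \<in> Y\<close>, where c = "min c c'"]
        \<open>v < c\<close> \<open>v < c'\<close> by auto
    have "ereal (min c c') \<le> ereal c" "ereal (min c c') \<le> ereal c'" by simp_all
    then have "x \<in> X''" "f x y < ereal c'"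
      using x unfolding X''_def by (auto dest: order.strict_trans2)
    then show ?thesis by blast
  qed
  have "P \<subseteq> Y" "X'' \<subseteq> X" using insert.prems by (auto simp: X''_def)
  then obtain x where "x \<in> X''" "\<forall>y\<in>P. f x y < ereal c"
    using insert.IH[OF _ convex _ below] by blast
  then show ?case unfolding X''_def by auto
qed

lemma uniformly_below_above_maximin:
  assumes "compact X" "convex X" "Y \<noteq> {}"
    and closed_sublevel: "\<And>y c. y \<in> Y \<Longrightarrow> closed {x \<in> X. f x y \<le> ereal c}"
    and "(SUP y\<in>Y. INF x\<in>X. f x y) < ereal c"
  shows "\<exists>x\<in>X. \<forall>y\<in>Y. f x y \<le> ereal c"
proof -
  obtain v where v: "(SUP y\<in>Y. INF x\<in>X. f x y) < ereal v" "v < c"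
    using ereal_dense2[OF assms(5)] by auto
  have below: "\<exists>x\<in>X. f x y < ereal c'" if "y \<in> Y" "v < c'" for y c'
  proof -
    have "(INF x\<in>X. f x y) \<le> (SUP y\<in>Y. INF x\<in>X. f x y)" using that(1) by (rule SUP_upper)
    also have "\<dots> < ereal v" by (fact v(1))
    also have "\<dots> < ereal c'" using that(2) by simp
    finally show ?thesis unfolding INF_less_iff .
  qed
  have "X \<inter> (\<Inter>y\<in>Y. {x \<in> X. f x y \<le> ereal c}) \<noteq> {}"
  proof (rule compact_imp_fip_image[OF \<open>compact X\<close>])
    show "closed {x \<in> X. f x y \<le> ereal c}" if "y \<in> Y" for y using closed_sublevel[OF that] .
    fix P assume "finite P" "P \<subseteq> Y"
    then obtain x where "x \<in> X" "\<forall>y\<in>P. f x y < ereal c"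
      using finite_set_simultaneously_below[OF _ _ \<open>Y \<noteq> {}\<close> \<open>convex X\<close> order_refl below \<open>v < c\<close>] by blast
    then show "X \<inter> (\<Inter>y\<in>P. {x \<in> X. f x y \<le> ereal c}) \<noteq> {}" by (auto intro: less_imp_le)
  qed
  then show ?thesis by blast
qed

theorem minimax_inequality:
  assumes "compact X" "convex X" "Y \<noteq> {}"
    and "\<And>y c. y \<in> Y \<Longrightarrow> closed {x \<in> X. f x y \<le> ereal c}"
  shows "(INF x\<in>X. SUP y\<in>Y. f x y) \<le> (SUP y\<in>Y. INF x\<in>X. f x y)"
proof (rule ccontr)
  assume "\<not> ?thesis"
  then obtain c where c: "(SUP y\<in>Y. INF x\<in>X. f x y) < ereal c" "ereal c < (INF x\<in>X. SUP y\<in>Y. f x y)"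
    using ereal_dense2[of "SUP y\<in>Y. INF x\<in>X. f x y"] by (auto simp: not_le)
  obtain x where "x \<in> X" "\<forall>y\<in>Y. f x y \<le> ereal c"
    using uniformly_below_above_maximin[OF assms c(1)] by blast
  then have "(INF x\<in>X. SUP y\<in>Y. f x y) \<le> ereal c" by (auto intro: INF_lower2 SUP_least)
  with c(2) show False by simp
qed

end

lemma lsc_rel_imp_le_liminf:
  fixes g :: "'a::metric_space \<Rightarrow> ereal"
  assumes "lsc_rel S g" "q \<in> S" "\<And>n. s n \<in> S" "s \<longlonglongrightarrow> q"
  shows "g q \<le> liminf (\<lambda>n. g (s n))"
proof (subst le_Liminf_iff, intro allI impI)
  fix a assume "a < g q"
  also have "g q \<le> Liminf (at q within S) g" using assms(1,2) unfolding lsc_rel_def by auto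
  finally have "eventually (\<lambda>x. a < g x) (at q within S)" by (rule less_LiminfD)
  then obtain d where "d > 0" and d: "\<And>x. x \<in> S \<Longrightarrow> x \<noteq> q \<Longrightarrow> dist x q < d \<Longrightarrow> a < g x"
    by (auto simp: eventually_at)
  have "eventually (\<lambda>n. dist (s n) q < d) sequentially" using assms(4) \<open>d > 0\<close> by (rule tendstoD)
  then show "eventually (\<lambda>n. a < g (s n)) sequentially"
  proof (rule eventually_mono)
    fix n assume "dist (s n) q < d"
    then show "a < g (s n)" using d assms(3) \<open>a < g q\<close> by (cases "s n = q") auto
  qed
qed

lemma lsc_rel_bounded_below:
  fixes g :: "'a::metric_space \<Rightarrow> ereal"
  assumes "compact S" "lsc_rel S g" "\<And>q. q \<in> S \<Longrightarrow> g q \<noteq> -\<infinity>"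
  shows "\<exists>m. \<forall>q\<in>S. ereal m \<le> g q"
proof (rule ccontr)
  assume "\<not> ?thesis"
  then have "\<forall>n::nat. \<exists>q\<in>S. g q < ereal (- real n)" by (auto simp: not_le)
  then obtain s where s: "\<And>n. s n \<in> S" "\<And>n. g (s n) < ereal (- real n)" by metis
  obtain l r where l: "l \<in> S" "strict_mono r" "(s \<circ> r) \<longlonglongrightarrow> l"
    using compact_imp_seq_compact[OF assms(1)] s(1) by (metis seq_compactE)
  obtain y where "ereal y < g l" using ereal_dense2[of "-\<infinity>" "g l"] assms(3)[OF l(1)] by auto
  also have "g l \<le> liminf (\<lambda>n. g (s (r n)))"
    using lsc_rel_imp_le_liminf[OF assms(2) l(1), of "s \<circ> r"] s(1) l(3) by simp
  finally have "eventually (\<lambda>n. ereal y < g (s (r n))) sequentially" by (rule less_LiminfD)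
  then obtain N where N: "\<And>n. n \<ge> N \<Longrightarrow> ereal y < g (s (r n))"
    by (auto simp: eventually_sequentially)
  define n where "n = max N (nat \<lceil>\<bar>y\<bar>\<rceil>)"
  have "ereal y < ereal (- real (r n))"
    using N[of n] s(2)[of "r n"] unfolding n_def by (meson max.cobounded1 order.strict_trans)
  moreover have "n \<le> r n" using l(2) by (rule seq_suble)
  moreover have "\<bar>y\<bar> \<le> real n" unfolding n_def by linarith
  ultimately show False by simp
qed

lemma liminf_sum_ge:
  fixes g :: "'i \<Rightarrow> nat \<Rightarrow> ereal"
  assumes "finite K" "\<And>k n. k \<in> K \<Longrightarrow> ereal b \<le> g k n"
  shows "(\<Sum>k\<in>K. liminf (g k)) \<le> liminf (\<lambda>n. \<Sum>k\<in>K. g k n)"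
  using assms
proof (induction K rule: finite_induct)
  case empty
  then show ?case by (simp add: Liminf_const)
next
  case (insert k K)
  have "ereal b \<le> liminf (g k)"
    using insert.prems by (intro Liminf_bounded) auto
  moreover have "ereal (real (card K) * b) \<le> liminf (\<lambda>n. \<Sum>j\<in>K. g j n)"
  proof (intro Liminf_bounded always_eventually allI)
    fix n
    have "(\<Sum>j\<in>K. ereal b) \<le> (\<Sum>j\<in>K. g j n)" using insert.prems by (intro sum_mono) auto
    then show "ereal (real (card K) * b) \<le> (\<Sum>j\<in>K. g j n)" by simp
  qed
  ultimately have "liminf (g k) + liminf (\<lambda>n. \<Sum>j\<in>K. g j n) \<le> liminf (\<lambda>n. g k n + (\<Sum>j\<in>K. g j n))"
    by (intro ereal_liminf_add_mono) auto
  moreover have "(\<Sum>j\<in>K. liminf (g j)) \<le> liminf (\<lambda>n. \<Sum>j\<in>K. g j n)"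
    using insert by auto
  ultimately show ?case
    using insert.hyps by (simp add: order_trans[OF add_left_mono])
qed

lemma prob_simplex_nth_bounds:
  assumes "q \<in> prob_simplex"
  shows "0 \<le> q $ i" "q $ i \<le> 1"
proof -
  have "q $ i \<le> (\<Sum>j\<in>UNIV. q $ j)"
    using assms by (intro member_le_sum) (auto simp: prob_simplex_def)
  then show "0 \<le> q $ i" "q $ i \<le> 1" using assms by (auto simp: prob_simplex_def)
qed

lemma convex_prob_simplex: "convex prob_simplex"
proof (rule convexI)
  fix a b :: "real^'n" and u v :: real
  assume "a \<in> prob_simplex" "b \<in> prob_simplex" "0 \<le> u" "0 \<le> v" "u + v = 1"
  then show "u *\<^sub>R a + v *\<^sub>R b \<in> prob_simplex"
    by (simp add: prob_simplex_def sum.distrib flip: sum_distrib_left)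
qed

lemma compact_prob_simplex: "compact prob_simplex"
proof -
  have "prob_simplex = {q. \<forall>i. q $ i \<in> {0..}} \<inter> {q. inner (\<chi> i. 1) q = (1 :: real)}"
    by (auto simp: prob_simplex_def inner_vec_def)
  moreover have "closed {q :: real^'n. \<forall>i. q $ i \<in> {0..}}"
    by (intro closed_vector_box allI closed_atLeast)
  ultimately have "closed prob_simplex"
    by (metis closed_Int closed_hyperplane)
  moreover have "prob_simplex \<subseteq> cbox 0 (\<chi> i. 1)"
    by (auto simp: mem_box_cart prob_simplex_nth_bounds)
  then have "bounded prob_simplex" by (rule bounded_subset[OF bounded_cbox])
  ultimately show ?thesis by (simp add: compact_eq_bounded_closed)
qed

lemma compact_vector_box:
  fixes S :: "'i::finite \<Rightarrow> 'a::euclidean_space set"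
  assumes "\<And>i. compact (S i)"
  shows "compact {x. \<forall>i. x $ i \<in> S i}"
proof -
  have "\<forall>i. \<exists>b. \<forall>z\<in>S i. norm z \<le> b" using assms compact_imp_bounded bounded_iff by blast
  then obtain B where B: "\<And>i z. z \<in> S i \<Longrightarrow> norm z \<le> B i" by metis
  have "norm x \<le> (\<Sum>i\<in>UNIV. B i)" if "\<forall>i. x $ i \<in> S i" for x
  proof -
    have "norm x \<le> (\<Sum>i\<in>UNIV. norm (x $ i))" unfolding norm_vec_def by (rule L2_set_le_sum) simp
    also have "\<dots> \<le> (\<Sum>i\<in>UNIV. B i)" using B that by (intro sum_mono) auto
    finally show ?thesis .
  qed
  then have "bounded {x. \<forall>i. x $ i \<in> S i}" by (auto simp: bounded_iff)
  moreover have "closed {x. \<forall>i. x $ i \<in> S i}"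
    using assms by (simp add: closed_vector_box compact_imp_closed)
  ultimately show ?thesis by (simp add: compact_eq_bounded_closed)
qed

text \<open>Rules are encoded as row-stochastic matrices: HOL puts no vector space structure on the
  function type \<open>'x \<Rightarrow> real^'y\<close>, whereas \<open>real^'y^'x\<close> is a Euclidean space.\<close>

definition stochastic_matrices :: "(real^'y::finite^'x::finite) set" where
  "stochastic_matrices = {H. \<forall>x. H $ x \<in> prob_simplex}"

lemma rules_eq_stochastic_matrices: "rules = vec_nth ` stochastic_matrices"
proof (intro equalityI subsetI)
  fix h :: "'x::finite \<Rightarrow> real^'y::finite" assume "h \<in> rules"
  then show "h \<in> vec_nth ` stochastic_matrices"
    by (intro image_eqI[of _ _ "vec_lambda h"]) (auto simp: rules_def stochastic_matrices_def)
qed (auto simp: rules_def stochastic_matrices_def)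

lemma convex_stochastic_matrices: "convex stochastic_matrices"
  unfolding stochastic_matrices_def
  by (rule convexI) (auto intro: convexD[OF convex_prob_simplex])

lemma compact_stochastic_matrices: "compact stochastic_matrices"
  unfolding stochastic_matrices_def by (rule compact_vector_box[OF compact_prob_simplex])

lemma score_function_bounded_below:
  assumes "score_function L"
  shows "\<exists>m. \<forall>y. \<forall>q\<in>prob_simplex. ereal m \<le> L q y"
proof -
  have "\<exists>m. \<forall>q\<in>prob_simplex. ereal m \<le> L q y" for y
    using assms unfolding score_function_def
    by (intro lsc_rel_bounded_below[OF compact_prob_simplex]) auto
  then obtain M where M: "\<And>y q. q \<in> prob_simplex \<Longrightarrow> ereal (M y) \<le> L q y" by metis
  have "ereal (Min (range M)) \<le> L q y" if "q \<in> prob_simplex" for q y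
    using M[OF that, of y] by (simp add: order_trans[rotated])
  then show ?thesis by blast
qed

lemma loss_eq_sum: "loss L h p = (\<Sum>k\<in>UNIV. ereal (p $ k) * L (h (fst k)) (snd k))"
  by (simp add: loss_def case_prod_unfold)

lemma loss_ge_lower_bound:
  assumes "\<And>q y. q \<in> prob_simplex \<Longrightarrow> ereal m \<le> L q y" "h \<in> rules" "p \<in> prob_simplex"
  shows "ereal m \<le> loss L h p"
proof -
  have "ereal m = (\<Sum>k\<in>UNIV. ereal (p $ k) * ereal m)"
    using assms(3) by (simp add: prob_simplex_def flip: sum_distrib_right)
  also have "\<dots> \<le> loss L h p"
    unfolding loss_eq_sum using assms
    by (intro sum_mono ereal_mult_left_mono) (auto simp: rules_def prob_simplex_nth_bounds)
  finally show ?thesis .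
qed

lemma loss_convex_comb_rules:
  assumes "score_function L" "h1 \<in> rules" "h2 \<in> rules" "\<And>k. 0 \<le> p $ k" "0 \<le> t" "t \<le> 1"
  shows "loss L (\<lambda>x. t *\<^sub>R h1 x + (1 - t) *\<^sub>R h2 x) p
    \<le> ereal t * loss L h1 p + ereal (1 - t) * loss L h2 p"
proof -
  let ?l = "\<lambda>h k. ereal (p $ k) * L (h (fst k)) (snd k)"
  have "?l (\<lambda>x. t *\<^sub>R h1 x + (1 - t) *\<^sub>R h2 x) k \<le> ereal t * ?l h1 k + ereal (1 - t) * ?l h2 k" for k
  proof -
    have "L (t *\<^sub>R h1 (fst k) + (1 - t) *\<^sub>R h2 (fst k)) (snd k)
        \<le> ereal t * L (h1 (fst k)) (snd k) + ereal (1 - t) * L (h2 (fst k)) (snd k)"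
      using assms unfolding score_function_def convex_ereal_on_def rules_def by blast
    then have "?l (\<lambda>x. t *\<^sub>R h1 x + (1 - t) *\<^sub>R h2 x) k
        \<le> ereal (p $ k) * (ereal t * L (h1 (fst k)) (snd k) + ereal (1 - t) * L (h2 (fst k)) (snd k))"
      using assms(4) by (intro ereal_mult_left_mono) auto
    also have "\<dots> = ereal t * ?l h1 k + ereal (1 - t) * ?l h2 k"
      using assms(4-6) by (rule ereal_convex_comb_mult_left)
    finally show ?thesis .
  qed
  then have "loss L (\<lambda>x. t *\<^sub>R h1 x + (1 - t) *\<^sub>R h2 x) p
      \<le> (\<Sum>k\<in>UNIV. ereal t * ?l h1 k + ereal (1 - t) * ?l h2 k)"
    unfolding loss_eq_sum by (rule sum_mono)
  also have "\<dots> = ereal t * loss L h1 p + ereal (1 - t) * loss L h2 p"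
    using assms(5,6) by (simp add: loss_eq_sum sum.distrib ereal_mult_sum_left)
  finally show ?thesis .
qed

lemma loss_convex_comb_distributions:
  assumes "\<And>k. 0 \<le> p1 $ k" "\<And>k. 0 \<le> p2 $ k" "0 \<le> t" "t \<le> 1"
  shows "loss L h (t *\<^sub>R p1 + (1 - t) *\<^sub>R p2) = ereal t * loss L h p1 + ereal (1 - t) * loss L h p2"
  unfolding loss_eq_sum using assms
  by (simp add: ereal_convex_comb_weights_mult ereal_mult_sum_left sum.distrib)

lemma loss_le_liminf:
  assumes L: "score_function L" and m: "\<And>q y. q \<in> prob_simplex \<Longrightarrow> ereal m \<le> L q y"
    and p: "p \<in> prob_simplex"
    and X: "\<And>n. X n \<in> stochastic_matrices" "X \<longlonglongrightarrow> H" and H: "H \<in> stochastic_matrices"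
  shows "loss L (vec_nth H) p \<le> liminf (\<lambda>n. loss L (vec_nth (X n)) p)"
proof -
  define g where "g k n = ereal (p $ k) * L (X n $ fst k) (snd k)" for k n
  have "ereal (p $ k) * L (H $ fst k) (snd k) \<le> liminf (g k)" for k
  proof -
    have "L (H $ fst k) (snd k) \<le> liminf (\<lambda>n. L (X n $ fst k) (snd k))"
      using L X H unfolding score_function_def stochastic_matrices_def
      by (intro lsc_rel_imp_le_liminf[where S = prob_simplex] tendsto_vec_nth) auto
    then have "ereal (p $ k) * L (H $ fst k) (snd k) \<le> ereal (p $ k) * liminf (\<lambda>n. L (X n $ fst k) (snd k))"
      using prob_simplex_nth_bounds[OF p] by (intro ereal_mult_left_mono) auto
    also have "\<dots> = liminf (g k)"
      unfolding g_def using prob_simplex_nth_bounds[OF p] by (simp add: Liminf_ereal_mult_left)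
    finally show ?thesis .
  qed
  then have "loss L (vec_nth H) p \<le> (\<Sum>k\<in>UNIV. liminf (g k))"
    unfolding loss_eq_sum by (rule sum_mono)
  also have "\<dots> \<le> liminf (\<lambda>n. \<Sum>k\<in>UNIV. g k n)"
  proof (rule liminf_sum_ge)
    fix k n
    have "\<bar>p $ k * m\<bar> \<le> \<bar>m\<bar>"
      unfolding abs_mult using prob_simplex_nth_bounds[OF p, of k] by (intro mult_left_le_one_le) auto
    then have "ereal (- \<bar>m\<bar>) \<le> ereal (p $ k) * ereal m" by simp
    also have "\<dots> \<le> g k n"
      using m X(1) prob_simplex_nth_bounds[OF p, of k] unfolding g_def stochastic_matrices_def
      by (intro ereal_mult_left_mono) auto
    finally show "ereal (- \<bar>m\<bar>) \<le> g k n" .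
  qed simp
  also have "\<dots> = liminf (\<lambda>n. loss L (vec_nth (X n)) p)"
    by (simp add: loss_eq_sum g_def)
  finally show ?thesis .
qed

lemma closed_loss_sublevel:
  assumes "score_function L" "\<And>q y. q \<in> prob_simplex \<Longrightarrow> ereal m \<le> L q y" "p \<in> prob_simplex"
  shows "closed {H \<in> stochastic_matrices. loss L (vec_nth H) p \<le> ereal c}"
  unfolding closed_sequential_limits
proof (intro allI impI, elim conjE)
  fix X H assume X: "\<forall>n. X n \<in> {H \<in> stochastic_matrices. loss L (vec_nth H) p \<le> ereal c}" "X \<longlonglongrightarrow> H"
  have "H \<in> stochastic_matrices"
    using X compact_imp_closed[OF compact_stochastic_matrices] by (auto simp: closed_sequential_limits)
  have "loss L (vec_nth H) p \<le> liminf (\<lambda>n. loss L (vec_nth (X n)) p)"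
    using X \<open>H \<in> stochastic_matrices\<close> by (intro loss_le_liminf[OF assms]) auto
  also have "\<dots> \<le> ereal c"
    using X(1) by (intro Liminf_le) auto
  finally show "H \<in> {H \<in> stochastic_matrices. loss L (vec_nth H) p \<le> ereal c}"
    using \<open>H \<in> stochastic_matrices\<close> by simp
qed

lemma convex_affine_payoff_loss:
  assumes L: "score_function L" and U: "U \<subseteq> prob_simplex" "convex U"
    and m: "\<And>q y. q \<in> prob_simplex \<Longrightarrow> ereal m \<le> L q y"
  shows "convex_affine_payoff stochastic_matrices U (\<lambda>H. loss L (vec_nth H)) m"
proof
  have nonneg: "\<And>k. 0 \<le> p $ k" if "p \<in> U" for p
    using that U(1) prob_simplex_nth_bounds by blast
  show "convex U" by (fact U(2))
  show "ereal m \<le> loss L (vec_nth H) p" if "H \<in> stochastic_matrices" "p \<in> U" for H p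
    using that U(1) by (intro loss_ge_lower_bound[OF m]) (auto simp: rules_eq_stochastic_matrices)
  show "loss L (vec_nth (t *\<^sub>R H1 + (1 - t) *\<^sub>R H2)) p
      \<le> ereal t * loss L (vec_nth H1) p + ereal (1 - t) * loss L (vec_nth H2) p"
    if "H1 \<in> stochastic_matrices" "H2 \<in> stochastic_matrices" "p \<in> U" "0 \<le> t" "t \<le> 1" for H1 H2 p t
  proof -
    have "vec_nth (t *\<^sub>R H1 + (1 - t) *\<^sub>R H2) = (\<lambda>x. t *\<^sub>R H1 $ x + (1 - t) *\<^sub>R H2 $ x)"
      by (rule ext) simp
    then show ?thesis
      using loss_convex_comb_rules[OF L, of "vec_nth H1" "vec_nth H2" p t] that nonneg
      by (simp add: rules_eq_stochastic_matrices)
  qed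
  show "loss L (vec_nth H) (t *\<^sub>R p1 + (1 - t) *\<^sub>R p2)
      = ereal t * loss L (vec_nth H) p1 + ereal (1 - t) * loss L (vec_nth H) p2"
    if "p1 \<in> U" "p2 \<in> U" "0 \<le> t" "t \<le> 1" for H p1 p2 t
    using that nonneg by (intro loss_convex_comb_distributions) auto
qed

lemma worst_loss_MRC_le_entropy_set:
  assumes L: "score_function L" and U: "U \<subseteq> prob_simplex" "convex U" "U \<noteq> {}"
    and "is_MRC L U h"
  shows "worst_loss L U h \<le> entropy_set L U"
proof -
  obtain m where m: "\<And>q y. q \<in> prob_simplex \<Longrightarrow> ereal m \<le> L q y"
    using score_function_bounded_below[OF L] by blast
  have "worst_loss L U h \<le> (INF g\<in>rules. worst_loss L U g)"
    using \<open>is_MRC L U h\<close> by (auto simp: is_MRC_def intro: INF_greatest)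
  also have "\<dots> = (INF H\<in>stochastic_matrices. SUP p\<in>U. loss L (vec_nth H) p)"
    by (simp add: rules_eq_stochastic_matrices worst_loss_def image_comp)
  also have "\<dots> \<le> (SUP p\<in>U. INF H\<in>stochastic_matrices. loss L (vec_nth H) p)"
    using compact_stochastic_matrices convex_stochastic_matrices U(3) closed_loss_sublevel[OF L m] U(1)
    by (intro convex_affine_payoff.minimax_inequality[OF convex_affine_payoff_loss[OF L U(1,2) m]]) auto
  also have "\<dots> = entropy_set L U"
    by (simp add: entropy_set_def entropy_def rules_eq_stochastic_matrices image_comp)
  finally show ?thesis .
qed

lemma INF_risk_eq_entropy: "(INF h\<in>rules. risk L p h) = entropy L p"
  by (simp add: risk_def entropy_def)

lemma risk_MRC_le_entropy_set:
  assumes "score_function L" "U \<subseteq> prob_simplex" "convex U" "pstar \<in> U" "is_MRC L U h"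
  shows "risk L pstar h \<le> entropy_set L U"
proof -
  have "risk L pstar h \<le> worst_loss L U h"
    unfolding risk_def worst_loss_def using \<open>pstar \<in> U\<close> by (rule SUP_upper)
  also have "\<dots> \<le> entropy_set L U"
    using worst_loss_MRC_le_entropy_set assms by blast
  finally show ?thesis .
qed

lemma MRC_is_Bayes_if_entropy_maximal:
  fixes h :: "'x::finite \<Rightarrow> real^'y::finite"
  assumes "score_function L" "U \<subseteq> prob_simplex" "convex U" "pstar \<in> U" "is_MRC L U h"
    and "entropy L pstar = entropy_set L U"
  shows "is_Bayes L pstar h"
  unfolding is_Bayes_def
proof (intro conjI ballI)
  show "h \<in> rules" using \<open>is_MRC L U h\<close> by (simp add: is_MRC_def)
  fix g :: "'x \<Rightarrow> real^'y" assume "g \<in> rules"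
  have "risk L pstar h \<le> entropy_set L U" using assms(1-5) by (rule risk_MRC_le_entropy_set)
  also have "\<dots> = (INF h\<in>rules. risk L pstar h)" using assms(6) by (simp add: INF_risk_eq_entropy)
  also have "\<dots> \<le> risk L pstar g" using \<open>g \<in> rules\<close> by (rule INF_lower)
  finally show "risk L pstar h \<le> risk L pstar g" .
qed

theorem corollary1:
  fixes L :: "real^'y::finite \<Rightarrow> 'y \<Rightarrow> ereal"
    and U :: "(real^('x::finite \<times> 'y)) set"
    and hU :: "'x \<Rightarrow> real^'y"
    and pstar :: "real^('x \<times> 'y)"
  assumes "score_function L"
    and "U \<subseteq> prob_simplex" and "convex U" and "compact U"
    and "is_MRC L U hU"
    and "pstar \<in> U"
  shows "(INF h\<in>rules. risk L pstar h) \<le> entropy_set L U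
         \<and> risk L pstar hU \<le> entropy_set L U
         \<and> (entropy L pstar = entropy_set L U \<longrightarrow>
           (\<forall>h. is_MRC L U h \<longrightarrow> is_Bayes L pstar h)
           \<and> (INF h\<in>rules. risk L pstar h) = risk L pstar hU
           \<and> risk L pstar hU = entropy_set L U)"
proof -
  have "entropy L pstar \<le> entropy_set L U"
    unfolding entropy_set_def using \<open>pstar \<in> U\<close> by (rule SUP_upper)
  moreover have "(INF h\<in>rules. risk L pstar h) \<le> risk L pstar hU"
    using \<open>is_MRC L U hU\<close> by (auto simp: is_MRC_def intro: INF_lower)
  moreover note risk_MRC_le_entropy_set[OF assms(1-3,6,5)]
    MRC_is_Bayes_if_entropy_maximal[OF assms(1-3,6)]
  ultimately show ?thesis by (auto simp: INF_risk_eq_entropy)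
qed

end
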